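(* For $\beta = n^2$ and $\epsilon = \frac{1}{10}$, any $(1\pm\epsilon)$ for-each cut sketching algorithm for $n$-node $\beta$-balanced graphs must output $\Omega(n \beta^{1/2})$ bits in the worst case.
   Context: Let $G=(V,E,w)$ be a weighted directed graph with non-negative weights; $w(S,T)$ is the total weight of edges from $S$ to $T$ and $\overline S=V\setminus S$. $G$ is $\beta$-balanced if it is strongly connected and $w(S,\overline S)\le\beta\,w(\overline S,S)$ for all $\varnothing\ne S\subsetneq V$. A function $g$ outputs a $(1\pm\epsilon)$ for-each cut sketch of $G$ if there is a recovering function $f$ such that for each $S\subseteq V$, with probability at least $2/3$, $(1-\epsilon)w(S,\overline S)\le f(S,g(G))\le(1+\epsilon)w(S,\overline S)$. A for-each cut sketching algorithm for a class of graphs is such a $g$ working for every graph in the class; its output size is the number of bits of $g(G)$. *)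

theory Defs
  imports "HOL-Probability.Probability_Mass_Function"
begin

text \<open>An n-node weighted digraph has vertex set V = {0..<n} and is given by a weight
function w, where w i j is the weight of the edge (i,j) (0 = no edge).
We require non-negative weights and zero weight outside V, so that the
representation of a graph is canonical.\<close>

definition wgraph :: "nat \<Rightarrow> (nat \<Rightarrow> nat \<Rightarrow> real) \<Rightarrow> bool" where
  "wgraph n w \<longleftrightarrow> (\<forall>i j. 0 \<le> w i j) \<and> (\<forall>i j. (i \<ge> n \<or> j \<ge> n) \<longrightarrow> w i j = 0)"

definition wset :: "(nat \<Rightarrow> nat \<Rightarrow> real) \<Rightarrow> nat set \<Rightarrow> nat set \<Rightarrow> real" where
  "wset w S T = (\<Sum>i\<in>S. \<Sum>j\<in>T. w i j)"

definition strongly_connected :: "nat \<Rightarrow> (nat \<Rightarrow> nat \<Rightarrow> real) \<Rightarrow> bool" where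
  "strongly_connected n w \<longleftrightarrow>
     (\<forall>i<n. \<forall>j<n. (i, j) \<in> {(a, b). a < n \<and> b < n \<and> w a b > 0}\<^sup>*)"

definition balanced :: "nat \<Rightarrow> real \<Rightarrow> (nat \<Rightarrow> nat \<Rightarrow> real) \<Rightarrow> bool" where
  "balanced n \<beta> w \<longleftrightarrow> wgraph n w \<and> strongly_connected n w \<and>
     (\<forall>S. S \<noteq> {} \<and> S \<subset> {0..<n} \<longrightarrow>
        wset w S ({0..<n} - S) \<le> \<beta> * wset w ({0..<n} - S) S)"

definition foreach_cut_sketch ::
  "nat \<Rightarrow> real \<Rightarrow> real \<Rightarrow> ((nat \<Rightarrow> nat \<Rightarrow> real) \<Rightarrow> bool list pmf) \<Rightarrow> (nat set \<Rightarrow> bool list \<Rightarrow> real) \<Rightarrow> bool"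
where
  "foreach_cut_sketch n \<beta> \<epsilon> g f \<longleftrightarrow>
     (\<forall>w. balanced n \<beta> w \<longrightarrow> (\<forall>S. S \<subseteq> {0..<n} \<longrightarrow>
        measure_pmf.prob (g w)
          {s. (1 - \<epsilon>) * wset w S ({0..<n} - S) \<le> f S s \<and>
              f S s \<le> (1 + \<epsilon>) * wset w S ({0..<n} - S)} \<ge> 2/3))"

end

theory Submission
  imports Defs
begin

text \<open>Split the vertices into L = {0..<k} and R = {k..<n} with k = n div 2, and encode a set A
of pairs in L \<times> R as the graph with an edge i \<rightarrow> j of weight 2 or 1 according to whether
(i, j) \<in> A, and every reverse edge of weight 2/n^2; this graph is n^2-balanced. The cut
{i} \<union> (R - {j}) crosses the edge i \<rightarrow> j and otherwise only reverse edges of total weight at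
most 2, so a (1 \<plusminus> 1/10)-estimate of it tells whether (i, j) \<in> A. Fix a set I of 15p such
pairs, p \<approx> n^2/60. By averaging, some sketch of the graph of A answers 2/3 of the queries
in I correctly, hence determines A up to Hamming distance |I|/3. A Hamming ball of that
radius contains at most 3^|I| / 2^(2|I|/3) subsets of I, and 3^15 < 2^24, so sketches
shorter than p bits cannot account for all 2^|I| subsets.\<close>

lemma exists_outcome_in_many_events:
  fixes P :: "'a pmf" and E :: "'b \<Rightarrow> 'a set"
  assumes fin: "finite I" and prob: "\<And>x. x \<in> I \<Longrightarrow> q \<le> measure_pmf.prob P (E x)"
  shows "\<exists>s\<in>set_pmf P. q * card I \<le> card {x\<in>I. s \<in> E x}"
proof -
  define Y where "Y s = real (card {x\<in>I. s \<in> E x})" for s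
  have Y_sum: "Y s = (\<Sum>x\<in>I. indicator (E x) s)" for s
    unfolding Y_def using fin by (simp add: indicator_def sum.If_cases Int_def)
  have Y_bound: "\<bar>Y s\<bar> \<le> card I" for s
    unfolding Y_def using fin by (simp add: card_mono)
  have fin_Y: "finite (Y ` set_pmf P)"
    by (rule finite_subset[of _ "real ` {0..card I}"]) (auto simp: Y_def fin card_mono)
  obtain s where s: "s \<in> set_pmf P" and "Y s = Max (Y ` set_pmf P)"
    using Max_in[OF fin_Y] set_pmf_not_empty by fastforce
  with fin_Y have max: "Y t \<le> Y s" if "t \<in> set_pmf P" for t
    using that by simp
  have "q * card I \<le> (\<Sum>x\<in>I. measure_pmf.prob P (E x))"
    using sum_mono[of I "\<lambda>_. q", OF prob] by (simp add: mult.commute)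
  also have "\<dots> = measure_pmf.expectation P Y"
    unfolding Y_sum
    by (subst Bochner_Integration.integral_sum)
       (auto intro!: measure_pmf.integrable_const_bound[where B=1])
  also have "\<dots> \<le> Y s"
    by (intro measure_pmf.integral_le_const measure_pmf.integrable_const_bound[where B="card I"])
       (auto simp: Y_bound AE_measure_pmf_iff max)
  finally show ?thesis using s unfolding Y_def by blast
qed

lemma card_small_subsets_mult_power_le:
  assumes fin: "finite I"
  shows "card {C. C \<subseteq> I \<and> card C \<le> r} * 2 ^ (card I - r) \<le> (3::nat) ^ card I"
proof -
  have "card {C. C \<subseteq> I \<and> card C \<le> r} * 2 ^ (card I - r)
      = (\<Sum>C\<in>{C. C \<subseteq> I \<and> card C \<le> r}. (2::nat) ^ (card I - r))" by simp
  also have "\<dots> \<le> (\<Sum>C\<in>{C. C \<subseteq> I \<and> card C \<le> r}. 2 ^ (card I - card C))"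
    by (intro sum_mono power_increasing) auto
  also have "\<dots> \<le> (\<Sum>C\<in>Pow I. 2 ^ (card I - card C))"
    using fin by (intro sum_mono2) auto
  also have "\<dots> = (\<Sum>C\<in>Pow I. (\<Prod>x\<in>C. 1) * (\<Prod>x\<in>I - C. 2))"
    using fin by (intro sum.cong) (auto simp: card_Diff_subset finite_subset)
  also have "\<dots> = (\<Prod>x\<in>I. 1 + 2)"
    by (rule prod_add[OF fin, symmetric])
  also have "\<dots> = 3 ^ card I" by (simp add: numeral_3_eq_3)
  finally show ?thesis .
qed

lemma card_shorter_bool_lists: "card {s :: bool list. length s < p} < 2 ^ p"
proof -
  have "{s :: bool list. length s < p} = (\<Union>l<p. {s. set s \<subseteq> UNIV \<and> length s = l})" by auto
  then have "card {s :: bool list. length s < p}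
      \<le> (\<Sum>l<p. card {s :: bool list. set s \<subseteq> UNIV \<and> length s = l})"
    by (simp add: card_UN_le)
  also have "\<dots> = (\<Sum>l<p. 2 ^ l)"
    using card_lists_length_eq[of "UNIV :: bool set"] by simp
  also have "\<dots> < 2 ^ p" by (simp add: lessThan_atLeast0 sum_power2)
  finally show ?thesis .
qed

lemma card_Pow_le_card_codes_mult_card_ball:
  fixes \<sigma> :: "'a set \<Rightarrow> 'c" and D :: "'c \<Rightarrow> 'a set"
  assumes fin: "finite I" and dec: "\<And>c. D c \<subseteq> I"
    and close: "\<And>A. A \<subseteq> I \<Longrightarrow> card (sym_diff A (D (\<sigma> A))) \<le> r"
  shows "2 ^ card I \<le> card (\<sigma> ` Pow I) * card {C. C \<subseteq> I \<and> card C \<le> r}"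
proof -
  define ball where "ball c = {A. A \<subseteq> I \<and> card (sym_diff A (D c)) \<le> r}" for c
  have fin_ball: "finite (ball c)" for c
    unfolding ball_def using fin by (auto intro: finite_subset[of _ "Pow I"])
  have card_ball: "card (ball c) \<le> card {C. C \<subseteq> I \<and> card C \<le> r}" for c
  proof (rule card_inj_on_le)
    show "inj_on (\<lambda>A. sym_diff A (D c)) (ball c)" by (rule inj_onI) blast
    show "(\<lambda>A. sym_diff A (D c)) ` ball c \<subseteq> {C. C \<subseteq> I \<and> card C \<le> r}"
      unfolding ball_def using dec by blast
    show "finite {C. C \<subseteq> I \<and> card C \<le> r}"
      using fin by (auto intro: finite_subset[of _ "Pow I"])
  qed
  have "2 ^ card I = card (Pow I)" using fin by (simp add: card_Pow)
  also have "\<dots> \<le> card (\<Union>c\<in>\<sigma> ` Pow I. ball c)"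
    using fin close fin_ball by (intro card_mono) (auto simp: ball_def)
  also have "\<dots> \<le> (\<Sum>c\<in>\<sigma> ` Pow I. card (ball c))"
    by (rule card_UN_le) (use fin in simp)
  also have "\<dots> \<le> card (\<sigma> ` Pow I) * card {C. C \<subseteq> I \<and> card C \<le> r}"
    using sum_bounded_above[of "\<sigma> ` Pow I" "\<lambda>c. card (ball c)"] card_ball by simp
  finally show ?thesis .
qed

lemma long_code_exists:
  fixes Enc :: "'a set \<Rightarrow> bool list set" and D :: "bool list \<Rightarrow> 'a set"
  assumes fin: "finite I" and card_I: "card I = 15 * p" and dec: "\<And>s. D s \<subseteq> I"
    and enc: "\<And>A. A \<subseteq> I \<Longrightarrow> \<exists>s\<in>Enc A. 3 * card (sym_diff A (D s)) \<le> card I"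
  shows "\<exists>A\<subseteq>I. \<exists>s\<in>Enc A. p \<le> length s"
proof (rule ccontr)
  assume no_long: "\<not> ?thesis"
  obtain \<sigma> where
    \<sigma>: "\<And>A. A \<subseteq> I \<Longrightarrow> \<sigma> A \<in> Enc A \<and> 3 * card (sym_diff A (D (\<sigma> A))) \<le> card I"
    using enc by metis
  have "\<sigma> ` Pow I \<subseteq> {s. length s < p}"
    using \<sigma> no_long by (auto simp: not_le)
  moreover have "finite {s :: bool list. length s < p}"
    by (rule finite_subset[OF _ finite_lists_length_le[of "UNIV :: bool set" p]]) auto
  ultimately have few_codes: "card (\<sigma> ` Pow I) < 2 ^ p"
    using card_shorter_bool_lists[of p] card_mono le_less_trans by blast
  have ball: "card {C. C \<subseteq> I \<and> card C \<le> 5 * p} * 2 ^ (10 * p) \<le> (3::nat) ^ (15 * p)"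
    using card_small_subsets_mult_power_le[OF fin, of "5 * p"] card_I by simp
  have "2 ^ card I \<le> card (\<sigma> ` Pow I) * card {C. C \<subseteq> I \<and> card C \<le> 5 * p}"
    using \<sigma> card_I by (intro card_Pow_le_card_codes_mult_card_ball[where D = D] fin dec) simp
  then have "(2::nat) ^ (15 * p) * 2 ^ (10 * p)
      \<le> card (\<sigma> ` Pow I) * (card {C. C \<subseteq> I \<and> card C \<le> 5 * p} * 2 ^ (10 * p))"
    using card_I by (simp add: mult.assoc)
  also have "\<dots> \<le> card (\<sigma> ` Pow I) * 3 ^ (15 * p)"
    using ball by (rule mult_le_mono2)
  also have "\<dots> < 2 ^ p * 3 ^ (15 * p)"
    using few_codes by simp
  also have "(3::nat) ^ (15 * p) \<le> 2 ^ (24 * p)"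
    unfolding power_mult by (rule power_mono) simp_all
  finally have "(2::nat) ^ (25 * p) < 2 ^ (25 * p)"
    by (simp add: power_add[symmetric])
  then show False by simp
qed

lemma wset_le_mult_wset_swap:
  assumes "\<And>a b. w a b \<le> \<beta> * w b a"
  shows "wset w S T \<le> \<beta> * wset w T S"
proof -
  have "wset w S T \<le> (\<Sum>a\<in>S. \<Sum>b\<in>T. \<beta> * w b a)"
    unfolding wset_def by (intro sum_mono assms)
  also have "\<dots> = \<beta> * wset w T S"
    unfolding wset_def by (simp add: sum_distrib_left sum.swap[of _ S T])
  finally show ?thesis .
qed

lemma wset_nonneg: "(\<And>a b. 0 \<le> w a b) \<Longrightarrow> 0 \<le> wset w S T"
  unfolding wset_def by (intro sum_nonneg)

lemma wset_add: "wset (\<lambda>a b. v a b + w a b) S T = wset v S T + wset w S T"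
  unfolding wset_def by (simp add: sum.distrib)

lemma wset_single_edge:
  assumes "finite S" "finite T" "i \<in> S" "j \<in> T"
  shows "wset (\<lambda>a b. if a = i \<and> b = j then c else 0) S T = c"
proof -
  have "wset (\<lambda>a b. if a = i \<and> b = j then c else 0) S T
      = (\<Sum>a\<in>S. if a = i then \<Sum>b\<in>T. if b = j then c else 0 else 0)"
    unfolding wset_def by (intro sum.cong) auto
  then show ?thesis using assms by simp
qed

definition code_graph :: "nat \<Rightarrow> nat \<Rightarrow> (nat \<times> nat) set \<Rightarrow> nat \<Rightarrow> nat \<Rightarrow> real" where
  "code_graph n k A a b =
     (if a < k \<and> k \<le> b \<and> b < n then (if (a, b) \<in> A then 2 else 1)
      else if b < k \<and> k \<le> a \<and> a < n then 2 / real n ^ 2 else 0)"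

lemma code_graph_nonneg: "0 \<le> code_graph n k A a b"
  by (simp add: code_graph_def)

lemma wgraph_code_graph: "wgraph n (code_graph n k A)"
  unfolding wgraph_def by (auto simp: code_graph_nonneg code_graph_def)

lemma code_graph_le_mult_swap:
  assumes "2 \<le> n"
  shows "code_graph n k A a b \<le> real n ^ 2 * code_graph n k A b a"
proof -
  have n: "0 < real n" "4 \<le> real n ^ 2"
    using power_mono[of 2 "real n" 2] assms by simp_all
  then have "2 / real n ^ 2 \<le> 1" "2 \<le> real n ^ 2 * (2 / real n ^ 2)"
    by (simp_all add: divide_le_eq)
  with n(2) show ?thesis
    by (auto simp: code_graph_def)
qed

lemma strongly_connected_code_graph:
  assumes "0 < k" "k < n"
  shows "strongly_connected n (code_graph n k A)"
  unfolding strongly_connected_def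
proof (intro allI impI)
  let ?R = "{(a, b). a < n \<and> b < n \<and> code_graph n k A a b > 0}"
  have forward: "(a, b) \<in> ?R" and backward: "(b, a) \<in> ?R" if "a < k" "k \<le> b" "b < n" for a b
    using that by (auto simp: code_graph_def)
  have to_0: "(i, 0) \<in> ?R\<^sup>*" if "i < n" for i
  proof (cases "i < k")
    case True
    with forward[of i k] backward[of 0 k] assms show ?thesis
      by (auto intro: rtrancl_trans[OF r_into_rtrancl r_into_rtrancl])
  qed (use backward[of 0 i] assms that in auto)
  have from_0: "(0, j) \<in> ?R\<^sup>*" if "j < n" for j
  proof (cases "j < k")
    case True
    with forward[of 0 k] backward[of j k] assms show ?thesis
      by (auto intro: rtrancl_trans[OF r_into_rtrancl r_into_rtrancl])
  qed (use forward[of 0 j] assms that in auto)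
  fix i j assume "i < n" "j < n"
  then show "(i, j) \<in> ?R\<^sup>*"
    by (rule rtrancl_trans[OF to_0 from_0])
qed

lemma balanced_code_graph:
  assumes "0 < k" "k < n"
  shows "balanced n (real n ^ 2) (code_graph n k A)"
proof -
  have "wset (code_graph n k A) S T \<le> real n ^ 2 * wset (code_graph n k A) T S" for S T
    using assms by (intro wset_le_mult_wset_swap code_graph_le_mult_swap) simp
  then show ?thesis
    unfolding balanced_def using assms wgraph_code_graph strongly_connected_code_graph by blast
qed

definition query_cut :: "nat \<Rightarrow> nat \<Rightarrow> nat \<times> nat \<Rightarrow> nat set" where
  "query_cut n k x = insert (fst x) ({k..<n} - {snd x})"

lemma code_graph_across_query_cut:
  assumes "i < k" "k \<le> j" "j < n" "a \<in> query_cut n k (i, j)" "b \<in> {0..<n} - query_cut n k (i, j)"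
  shows "code_graph n k A a b
      = code_graph n k {} a b + (if a = i \<and> b = j then if (i, j) \<in> A then 1 else 0 else 0)"
    and "code_graph n k {} a b \<le> (if a = i \<and> b = j then 1 else 0) + 2 / real n ^ 2"
  using assms by (auto simp: code_graph_def query_cut_def)

lemma wset_code_graph_query_cut:
  assumes "i < k" "k \<le> j" "j < n"
  defines "S \<equiv> query_cut n k (i, j)"
  shows "wset (code_graph n k A) S ({0..<n} - S)
      = wset (code_graph n k {}) S ({0..<n} - S) + (if (i, j) \<in> A then 1 else 0)"
proof -
  have "i \<in> S" "j \<in> {0..<n} - S"
    using assms by (auto simp: query_cut_def)
  moreover have "wset (code_graph n k A) S ({0..<n} - S)
      = wset (\<lambda>a b. code_graph n k {} a b
          + (if a = i \<and> b = j then if (i, j) \<in> A then 1 else 0 else 0)) S ({0..<n} - S)"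
    unfolding wset_def S_def using assms(1-3) code_graph_across_query_cut(1)
    by (intro sum.cong refl) blast
  ultimately show ?thesis
    by (simp add: wset_add wset_single_edge S_def query_cut_def)
qed

lemma wset_code_graph_query_cut_le:
  assumes "i < k" "k \<le> j" "j < n"
  defines "S \<equiv> query_cut n k (i, j)"
  shows "wset (code_graph n k {}) S ({0..<n} - S) \<le> 3"
proof -
  let ?T = "{0..<n} - S"
  have fin: "finite S" "finite ?T" and ij: "i \<in> S" "j \<in> ?T"
    using assms by (auto simp: query_cut_def)
  have "S \<subseteq> {0..<n}"
    using assms by (auto simp: query_cut_def)
  then have "card S \<le> n" "card ?T \<le> n"
    using card_mono[of "{0..<n}"] by fastforce+
  then have small: "real (card S) * real (card ?T) * (2 / real n ^ 2) \<le> 2"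
    using assms mult_mono[of "real (card S)" n "real (card ?T)" n]
    by (simp add: power2_eq_square divide_le_eq)
  have "wset (code_graph n k {}) S ?T
      \<le> wset (\<lambda>a b. (if a = i \<and> b = j then 1 else 0) + 2 / real n ^ 2) S ?T"
    unfolding wset_def S_def using assms(1-3) code_graph_across_query_cut(2)
    by (intro sum_mono) blast
  also have "\<dots> = 1 + real (card S) * real (card ?T) * (2 / real n ^ 2)"
    using fin ij by (simp add: wset_add wset_single_edge) (simp add: wset_def)
  finally show ?thesis using small by simp
qed

lemma estimate_decides_increment:
  fixes c y :: real
  assumes "0 \<le> c" "c \<le> 3"
    and "(1 - 1/10) * (c + (if P then 1 else 0)) \<le> y" "y \<le> (1 + 1/10) * (c + (if P then 1 else 0))"
  shows "P \<longleftrightarrow> 11/10 * c < y"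
  using assms by (cases P) simp_all

lemma sketch_decodes_code_graph:
  assumes sketch: "foreach_cut_sketch n (real n ^ 2) (1/10) g f"
    and k: "0 < k" "k < n" and I: "finite I" "I \<subseteq> {0..<k} \<times> {k..<n}"
  obtains D where "\<And>s. D s \<subseteq> I"
    and "\<And>A. A \<subseteq> I \<Longrightarrow> \<exists>s\<in>set_pmf (g (code_graph n k A)). 3 * card (sym_diff A (D s)) \<le> card I"
proof -
  define cut where
    "cut A x = wset (code_graph n k A) (query_cut n k x) ({0..<n} - query_cut n k x)" for A x
  define D where "D s = {x\<in>I. 11/10 * cut {} x < f (query_cut n k x) s}" for s
  define good where "good A x = {s. (1 - 1/10) * cut A x \<le> f (query_cut n k x) s \<and>
      f (query_cut n k x) s \<le> (1 + 1/10) * cut A x}" for A x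
  have decode: "x \<in> A \<longleftrightarrow> x \<in> D s" if "x \<in> I" "s \<in> good A x" for A x s
  proof -
    obtain i j where x: "x = (i, j)" and ij: "i < k" "k \<le> j" "j < n"
      using I(2) \<open>x \<in> I\<close> by auto
    have "cut A x = cut {} x + (if x \<in> A then 1 else 0)"
      unfolding cut_def x by (rule wset_code_graph_query_cut[OF ij])
    moreover have "0 \<le> cut {} x"
      unfolding cut_def by (intro wset_nonneg code_graph_nonneg)
    moreover have "cut {} x \<le> 3"
      unfolding cut_def x by (rule wset_code_graph_query_cut_le[OF ij])
    ultimately have "x \<in> A \<longleftrightarrow> 11/10 * cut {} x < f (query_cut n k x) s"
      using \<open>s \<in> good A x\<close> unfolding good_def by (intro estimate_decides_increment) auto
    with \<open>x \<in> I\<close> show ?thesis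
      unfolding D_def by blast
  qed
  have close: "\<exists>s\<in>set_pmf (g (code_graph n k A)). 3 * card (sym_diff A (D s)) \<le> card I"
    if "A \<subseteq> I" for A
  proof -
    have "2/3 \<le> measure_pmf.prob (g (code_graph n k A)) (good A x)" if "x \<in> I" for x
    proof -
      have "query_cut n k x \<subseteq> {0..<n}"
        using I(2) \<open>x \<in> I\<close> k by (auto simp: query_cut_def)
      then show ?thesis
        using sketch balanced_code_graph[OF k]
        unfolding foreach_cut_sketch_def good_def cut_def by blast
    qed
    then obtain s where s: "s \<in> set_pmf (g (code_graph n k A))"
      and many_good: "2/3 * card I \<le> card {x\<in>I. s \<in> good A x}"
      using exists_outcome_in_many_events[OF I(1)] by blast
    have "sym_diff A (D s) \<subseteq> I - {x\<in>I. s \<in> good A x}"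
      using decode \<open>A \<subseteq> I\<close> unfolding D_def by blast
    then have "card (sym_diff A (D s)) \<le> card (I - {x\<in>I. s \<in> good A x})"
      using I(1) by (intro card_mono) simp_all
    also have "\<dots> = card I - card {x\<in>I. s \<in> good A x}"
      using I(1) by (intro card_Diff_subset) auto
    finally have "card (sym_diff A (D s)) \<le> card I - card {x\<in>I. s \<in> good A x}" .
    with many_good have "3 * card (sym_diff A (D s)) \<le> card I"
      by linarith
    with s show ?thesis
      by blast
  qed
  have "D s \<subseteq> I" for s
    unfolding D_def by blast
  then show thesis
    using close by (rule that)
qed

lemma square_div_1000_le_half_square_div_15:
  fixes n :: nat
  assumes "10 \<le> n"
  shows "real n ^ 2 / 1000 \<le> real ((n div 2) * (n div 2) div 15)"
proof -
  define k where "k = n div 2"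
  define p where "p = k * k div 15"
  have "k * k \<le> 15 * p + 14"
    unfolding p_def by linarith
  then have p: "real k ^ 2 \<le> 15 * real p + 14"
    by (simp add: power2_eq_square flip: of_nat_mult of_nat_add of_nat_le_iff)
  have "real n - 1 \<le> 2 * real k"
    unfolding k_def by linarith
  then have "(real n - 1) ^ 2 \<le> (2 * real k) ^ 2"
    using assms by (intro power_mono) simp_all
  moreover have "10 * real n \<le> real n ^ 2"
    using assms by (simp add: power2_eq_square)
  ultimately have "real n ^ 2 / 1000 \<le> real p"
    using p assms by (simp add: power2_diff power_mult_distrib)
  then show ?thesis
    unfolding p_def k_def .
qed

lemma foreach_cut_sketch_long_output:
  assumes sketch: "foreach_cut_sketch n (real n ^ 2) (1/10) g f"
    and k: "0 < k" "k < n" and p: "15 * p \<le> k * (n - k)"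
  shows "\<exists>A. \<exists>s\<in>set_pmf (g (code_graph n k A)). p \<le> length s"
proof -
  from p have "15 * p \<le> card ({0..<k} \<times> {k..<n})"
    by (simp add: card_cartesian_product)
  then obtain I where I: "I \<subseteq> {0..<k} \<times> {k..<n}" "card I = 15 * p" "finite I"
    by (rule obtain_subset_with_card_n)
  obtain D where "\<And>s. D s \<subseteq> I"
    and "\<And>A. A \<subseteq> I \<Longrightarrow> \<exists>s\<in>set_pmf (g (code_graph n k A)). 3 * card (sym_diff A (D s)) \<le> card I"
    using sketch_decodes_code_graph[OF sketch k I(3,1)] by blast
  then have "\<exists>A\<subseteq>I. \<exists>s\<in>set_pmf (g (code_graph n k A)). p \<le> length s"
    by (intro long_code_exists[where D = D] I(2,3))
  then show ?thesis
    by blast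
qed

theorem lemma18:
  shows "\<exists>c > 0. \<exists>N. \<forall>n \<ge> N. \<forall>g f.
     foreach_cut_sketch n (real n ^ 2) (1/10) g f \<longrightarrow>
     (\<exists>w. balanced n (real n ^ 2) w \<and>
        (\<exists>s \<in> set_pmf (g w). real (length s) \<ge> c * real n * sqrt (real n ^ 2)))"
proof (intro exI[of _ "1/1000"] conjI exI[of _ "10::nat"] allI impI)
  fix n :: nat and g f
  assume n: "10 \<le> n" and sketch: "foreach_cut_sketch n (real n ^ 2) (1/10) g f"
  define k where "k = n div 2"
  define p where "p = k * k div 15"
  have k: "0 < k" "k < n"
    using n unfolding k_def by auto
  have "15 * p \<le> k * k"
    unfolding p_def by linarith
  also have "\<dots> \<le> k * (n - k)"
    unfolding k_def by (intro mult_le_mono2) linarith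
  finally obtain A s where "s \<in> set_pmf (g (code_graph n k A))" "p \<le> length s"
    using foreach_cut_sketch_long_output[OF sketch k] by blast
  moreover have "1/1000 * real n * sqrt (real n ^ 2) \<le> real p"
    using square_div_1000_le_half_square_div_15[OF n] by (simp add: p_def k_def power2_eq_square)
  ultimately show "\<exists>w. balanced n (real n ^ 2) w \<and>
      (\<exists>s \<in> set_pmf (g w). real (length s) \<ge> 1/1000 * real n * sqrt (real n ^ 2))"
    using balanced_code_graph[OF k] by force
qed simp

end
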